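(* Let $\mathfrak{h}^s$ be a Hilbert space of dimension $d_s$ with orthonormal basis $|1\rangle,\dots,|d_s\rangle$, viewed as the fundamental representation of $\mathfrak{su}(\mathfrak{h}^s)$, and let $\hat{H}^1,\dots,\hat{H}^{d_s-1}$ be a Cartan subalgebra basis (a basis of the traceless operators diagonal in this basis). On $\bigotimes_{x=1}^N\mathfrak{h}^s_x$ let $\hat{H}^i_x$ denote $\hat{H}^i$ acting on site $x$ and $\hat{H}^i_{\mathrm{tot}}=\sum_{x=1}^N\hat{H}^i_x$. (1) Any linear operator $\hat{O}$ on $\bigotimes_{x=1}^N\mathfrak{h}^s_x$ commuting with all $\hat{H}^i_{\mathrm{tot}}$ ($1\le i\le d_s-1$) is a linear combination of operators of the form $\hat{p}\,\hat{\sigma}$, where $\hat{p}$ lies in the unital algebra generated by $\{\hat{H}^i_x:1\le i\le d_s-1,\ 1\le x\le N\}$ and $\sigma\in\mathfrak{S}_N$. (2) If $d_s=2$, then any linear operator $\hat{O}$ on $\bigotimes_{x=1}^N\mathfrak{h}^s_x$ can be written as $\hat{O}=\hat{O}_++\hat{O}_-$, where $\hat{O}_+$ is a linear combination of operators $\hat{p}\,\hat{\sigma}$ with $\hat{p}$ in the unital algebra generated by $\{\hat{\sigma}^3_x,\hat{\sigma}^+_x:1\le x\le N\}$ and $\sigma\in\mathfrak{S}_N$, and $\hat{O}_-$ is a linear combination of operators $\hat{p}\,\hat{\sigma}$ with $\hat{p}$ in the unital algebra generated by $\{\hat{\sigma}^3_x,\hat{\sigma}^-_x:1\le x\le N\}$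 and $\sigma\in\mathfrak{S}_N$.
   Context: For $\sigma\in\mathfrak{S}_N$, $\hat{\sigma}$ denotes the operator permuting tensor factors, $\hat{\sigma}\,|e_1\rangle\otimes\cdots\otimes|e_N\rangle=|e_{\sigma(1)}\rangle\otimes\cdots\otimes|e_{\sigma(N)}\rangle$. For $d_s=2$, $\hat{\sigma}^3$ is the Pauli-$z$ operator and $\hat{\sigma}^\pm$ the spin raising/lowering operators; a subscript $x$ means acting on site $x$. *)

theory Defs
  imports Complex_Main "HOL-Combinatorics.Permutations"
begin

text \<open>Sites are 0,...,N-1; the one-site basis |1>,...,|d> is indexed by 0,...,d-1.
  A basis vector of the N-site tensor product is a configuration c with
  c x < d for x < N (and c x = 0 for x >= N, for extensionality).
  Operators are given by their matrix entries T c c' = <c|T|c'>.\<close>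

type_synonym cfg = "nat \<Rightarrow> nat"
type_synonym op = "cfg \<Rightarrow> cfg \<Rightarrow> complex"

definition cfgs :: "nat \<Rightarrow> nat \<Rightarrow> cfg set" where
  "cfgs d N = {c. (\<forall>x<N. c x < d) \<and> (\<forall>x\<ge>N. c x = 0)}"

definition is_op :: "nat \<Rightarrow> nat \<Rightarrow> op \<Rightarrow> bool" where
  "is_op d N T \<longleftrightarrow> (\<forall>c c'. (c \<notin> cfgs d N \<or> c' \<notin> cfgs d N) \<longrightarrow> T c c' = 0)"

definition op_mul :: "nat \<Rightarrow> nat \<Rightarrow> op \<Rightarrow> op \<Rightarrow> op" where
  "op_mul d N A B = (\<lambda>c c'. \<Sum>c''\<in>cfgs d N. A c c'' * B c'' c')"

definition op_id :: "nat \<Rightarrow> nat \<Rightarrow> op" where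
  "op_id d N = (\<lambda>c c'. if c = c' \<and> c \<in> cfgs d N then 1 else 0)"

definition site_op :: "nat \<Rightarrow> nat \<Rightarrow> nat \<Rightarrow> (nat \<Rightarrow> nat \<Rightarrow> complex) \<Rightarrow> op" where
  "site_op d N x M = (\<lambda>c c'. if c \<in> cfgs d N \<and> c' \<in> cfgs d N \<and> (\<forall>y. y \<noteq> x \<longrightarrow> c y = c' y)
                            then M (c x) (c' x) else 0)"

text \<open>Permutation operator: sigma-hat |e_c(0) ... e_c(N-1)> = |e_c(sigma 0) ... e_c(sigma(N-1))>,
  i.e. it maps basis vector c to c o sigma.\<close>
definition perm_op :: "nat \<Rightarrow> nat \<Rightarrow> (nat \<Rightarrow> nat) \<Rightarrow> op" where
  "perm_op d N \<sigma> = (\<lambda>c c'. if c \<in> cfgs d N \<and> c' \<in> cfgs d N \<and> c = c' \<circ> \<sigma> then 1 else 0)"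

inductive_set alg_gen :: "nat \<Rightarrow> nat \<Rightarrow> op set \<Rightarrow> op set" for d N S where
  gen: "A \<in> S \<Longrightarrow> A \<in> alg_gen d N S"
| unit: "op_id d N \<in> alg_gen d N S"
| add: "A \<in> alg_gen d N S \<Longrightarrow> B \<in> alg_gen d N S \<Longrightarrow> (\<lambda>c c'. A c c' + B c c') \<in> alg_gen d N S"
| smult: "A \<in> alg_gen d N S \<Longrightarrow> (\<lambda>c c'. a * A c c') \<in> alg_gen d N S"
| mul: "A \<in> alg_gen d N S \<Longrightarrow> B \<in> alg_gen d N S \<Longrightarrow> op_mul d N A B \<in> alg_gen d N S"

definition perm_span :: "nat \<Rightarrow> nat \<Rightarrow> op set \<Rightarrow> op \<Rightarrow> bool" where
  "perm_span d N S T \<longleftrightarrow> (\<exists>k::nat. \<exists>a::nat \<Rightarrow> complex. \<exists>p::nat \<Rightarrow> op. \<exists>\<sigma>::nat \<Rightarrow> nat \<Rightarrow> nat.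
      (\<forall>j<k. p j \<in> alg_gen d N S \<and> \<sigma> j permutes {..<N}) \<and>
      T = (\<lambda>c c'. \<Sum>j<k. a j * op_mul d N (p j) (perm_op d N (\<sigma> j)) c c'))"

definition diag_mat :: "(nat \<Rightarrow> complex) \<Rightarrow> nat \<Rightarrow> nat \<Rightarrow> complex" where
  "diag_mat v = (\<lambda>a b. if a = b then v a else 0)"

text \<open>H 0, ..., H (d-2) (diagonal entries H i a, a < d) form a basis of the traceless
  diagonal operators on C^d (a Cartan subalgebra basis).\<close>
definition cartan_basis :: "nat \<Rightarrow> (nat \<Rightarrow> nat \<Rightarrow> complex) \<Rightarrow> bool" where
  "cartan_basis d H \<longleftrightarrow>
     (\<forall>i<d-1. (\<Sum>a<d. H i a) = 0) \<and>
     (\<forall>u::nat \<Rightarrow> complex. (\<forall>a<d. (\<Sum>i<d-1. u i * H i a) = 0) \<longrightarrow> (\<forall>i<d-1. u i = 0)) \<and>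
     (\<forall>v::nat \<Rightarrow> complex. (\<Sum>a<d. v a) = 0 \<longrightarrow>
        (\<exists>u::nat \<Rightarrow> complex. \<forall>a<d. v a = (\<Sum>i<d-1. u i * H i a)))"

definition H_site :: "nat \<Rightarrow> nat \<Rightarrow> (nat \<Rightarrow> nat \<Rightarrow> complex) \<Rightarrow> nat \<Rightarrow> nat \<Rightarrow> op" where
  "H_site d N H i x = site_op d N x (diag_mat (H i))"

definition H_tot :: "nat \<Rightarrow> nat \<Rightarrow> (nat \<Rightarrow> nat \<Rightarrow> complex) \<Rightarrow> nat \<Rightarrow> op" where
  "H_tot d N H i = (\<lambda>c c'. \<Sum>x<N. H_site d N H i x c c')"

text \<open>Spin-1/2 operators in the basis |1> = index 0 (spin up), |2> = index 1 (spin down).\<close>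
definition pauli_z :: "nat \<Rightarrow> nat \<Rightarrow> complex" where
  "pauli_z = (\<lambda>a b. if a = 0 \<and> b = 0 then 1 else if a = 1 \<and> b = 1 then -1 else 0)"

definition sigma_plus :: "nat \<Rightarrow> nat \<Rightarrow> complex" where
  "sigma_plus = (\<lambda>a b. if a = 0 \<and> b = 1 then 1 else 0)"

definition sigma_minus :: "nat \<Rightarrow> nat \<Rightarrow> complex" where
  "sigma_minus = (\<lambda>a b. if a = 1 \<and> b = 0 then 1 else 0)"

end

theory Submission
  imports Defs "HOL-Library.Multiset"
begin

text \<open>Expand an operator in the matrix units \<open>|c\<rangle>\<langle>c'|\<close> of the product basis. If \<open>T\<close>
  commutes with every \<open>H\<^sup>i\<^sub>t\<^sub>o\<^sub>t\<close>, a nonzero entry \<open>\<langle>c|T|c'\<rangle>\<close> forces \<open>c\<close> and \<open>c'\<close>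
  to have the same \<open>H\<^sup>i\<^sub>t\<^sub>o\<^sub>t\<close>-eigenvalues. As the \<open>H\<^sup>i\<close> together with the identity
  span all diagonal matrices, \<open>c\<close> and \<open>c'\<close> then have the same occupation numbers, so
  \<open>c = c' \<circ> \<sigma>\<close> for a permutation \<open>\<sigma>\<close>, and \<open>|c\<rangle>\<langle>c'| = |c\<rangle>\<langle>c| \<sigma>\<close>; the projector
  \<open>|c\<rangle>\<langle>c|\<close> is a product of one-site projectors, which are polynomials in the \<open>H\<^sup>i\<^sub>x\<close>.

  For spin 1/2 no commutation is needed: if \<open>c'\<close> has at most as many up spins as \<open>c\<close>,
  a permutation moves the up spins of \<open>c'\<close> onto up spins of \<open>c\<close>, and then every
  one-site factor of \<open>|c\<rangle>\<langle>c' \<circ> \<sigma>|\<close> is a projector or \<open>\<sigma>\<^sup>+\<close>. Otherwise \<open>c'\<close> has at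
  most as many down spins as \<open>c\<close>, and the same works with \<open>\<sigma>\<^sup>-\<close>.\<close>

definition unit_mat :: "nat \<Rightarrow> nat \<Rightarrow> nat \<Rightarrow> nat \<Rightarrow> complex" where
  "unit_mat a b = (\<lambda>a' b'. if a' = a \<and> b' = b then 1 else 0)"

definition unit_op :: "cfg \<Rightarrow> cfg \<Rightarrow> op" where
  "unit_op c e = (\<lambda>c1 c2. if c1 = c \<and> c2 = e then 1 else 0)"

definition occupation :: "nat \<Rightarrow> cfg \<Rightarrow> nat \<Rightarrow> nat" where
  "occupation N c a = card {x. x < N \<and> c x = a}"

lemma sum_eq_single:
  assumes "finite S" "a \<in> S" "\<And>x. x \<in> S \<Longrightarrow> x \<noteq> a \<Longrightarrow> f x = 0"
  shows "sum f S = f a"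
  using sum.mono_neutral_right[of S "{a}" f] assms by auto

lemma finite_cfgs: "finite (cfgs d N)"
proof -
  let ?ext = "\<lambda>f x. if x < N then f x else 0"
  have "cfgs d N \<subseteq> ?ext ` ({..<N} \<rightarrow>\<^sub>E {..<d})"
  proof
    fix c assume c: "c \<in> cfgs d N"
    then have "c = ?ext (restrict c {..<N})" and "restrict c {..<N} \<in> {..<N} \<rightarrow>\<^sub>E {..<d}"
      by (auto simp: cfgs_def fun_eq_iff)
    then show "c \<in> ?ext ` ({..<N} \<rightarrow>\<^sub>E {..<d})" by blast
  qed
  then show ?thesis by (rule finite_subset) (intro finite_imageI finite_PiE; simp)
qed

lemma comp_permutes_in_cfgs:
  assumes "\<sigma> permutes {..<N}" "c \<in> cfgs d N"
  shows "c \<circ> \<sigma> \<in> cfgs d N"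
  using assms permutes_in_image[OF assms(1)] permutes_not_in[OF assms(1)]
  by (auto simp: cfgs_def)

subsection \<open>Linear combinations of permutation operators\<close>

lemma perm_span_zero: "perm_span d N S (\<lambda>_ _. 0)"
  unfolding perm_span_def by (intro exI[of _ 0]) simp

lemma perm_span_smult:
  assumes "perm_span d N S T"
  shows "perm_span d N S (\<lambda>c c'. \<alpha> * T c c')"
proof -
  obtain k :: nat and a p \<sigma> where h: "\<forall>j<k. p j \<in> alg_gen d N S \<and> \<sigma> j permutes {..<N}"
    "T = (\<lambda>c c'. \<Sum>j<k. a j * op_mul d N (p j) (perm_op d N (\<sigma> j)) c c')"
    using assms unfolding perm_span_def by blast
  have "(\<lambda>c c'. \<alpha> * T c c') = (\<lambda>c c'. \<Sum>j<k. (\<alpha> * a j) * op_mul d N (p j) (perm_op d N (\<sigma> j)) c c')"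
    using h(2) by (simp add: sum_distrib_left mult.assoc)
  then show ?thesis
    unfolding perm_span_def using h(1) by (intro exI[of _ k] exI[of _ "\<lambda>j. \<alpha> * a j"]) blast
qed

lemma perm_span_add:
  assumes "perm_span d N S A" "perm_span d N S B"
  shows "perm_span d N S (\<lambda>c c'. A c c' + B c c')"
proof -
  obtain k1 :: nat and a1 p1 s1 where h1: "\<forall>j<k1. p1 j \<in> alg_gen d N S \<and> s1 j permutes {..<N}"
    "A = (\<lambda>c c'. \<Sum>j<k1. a1 j * op_mul d N (p1 j) (perm_op d N (s1 j)) c c')"
    using assms(1) unfolding perm_span_def by blast
  obtain k2 :: nat and a2 p2 s2 where h2: "\<forall>j<k2. p2 j \<in> alg_gen d N S \<and> s2 j permutes {..<N}"
    "B = (\<lambda>c c'. \<Sum>j<k2. a2 j * op_mul d N (p2 j) (perm_op d N (s2 j)) c c')"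
    using assms(2) unfolding perm_span_def by blast
  define a where "a j = (if j < k1 then a1 j else a2 (j - k1))" for j
  define p where "p j = (if j < k1 then p1 j else p2 (j - k1))" for j
  define s where "s j = (if j < k1 then s1 j else s2 (j - k1))" for j
  have split: "(\<Sum>j<k1+k2. f j) = (\<Sum>j<k1. f j) + (\<Sum>j<k2. f (j + k1))" for f :: "nat \<Rightarrow> complex"
  proof -
    have "(\<Sum>j<k1+k2. f j) = (\<Sum>j<k1. f j) + (\<Sum>j\<in>{k1..<k1+k2}. f j)"
      by (simp add: atLeast0LessThan[symmetric] sum.atLeastLessThan_concat)
    then show ?thesis
      using sum.shift_bounds_nat_ivl[of f 0 k1 k2] by (simp add: add.commute atLeast0LessThan)
  qed
  have "(\<lambda>c c'. A c c' + B c c') = (\<lambda>c c'. \<Sum>j<k1+k2. a j * op_mul d N (p j) (perm_op d N (s j)) c c')"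
    unfolding split h1(2) h2(2) by (simp add: a_def p_def s_def)
  moreover have "\<forall>j<k1+k2. p j \<in> alg_gen d N S \<and> s j permutes {..<N}"
    using h1(1) h2(1) by (auto simp: p_def s_def)
  ultimately show ?thesis
    unfolding perm_span_def by blast
qed

lemma perm_span_sum:
  assumes "finite I" "\<And>i. i \<in> I \<Longrightarrow> perm_span d N S (F i)"
  shows "perm_span d N S (\<lambda>c c'. \<Sum>i\<in>I. F i c c')"
  using assms
  by (induction I rule: finite_induct) (simp_all add: perm_span_zero perm_span_add)

lemma op_mul_perm_op:
  assumes "\<sigma> permutes {..<N}"
  shows "op_mul d N p (perm_op d N \<sigma>) = (\<lambda>c1 c2. if c2 \<in> cfgs d N then p c1 (c2 \<circ> \<sigma>) else 0)"
proof (intro ext)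
  fix c1 c2
  show "op_mul d N p (perm_op d N \<sigma>) c1 c2 = (if c2 \<in> cfgs d N then p c1 (c2 \<circ> \<sigma>) else 0)"
  proof (cases "c2 \<in> cfgs d N")
    case True
    then have c2\<sigma>: "c2 \<circ> \<sigma> \<in> cfgs d N" using comp_permutes_in_cfgs assms by blast
    have "op_mul d N p (perm_op d N \<sigma>) c1 c2 = p c1 (c2 \<circ> \<sigma>) * perm_op d N \<sigma> (c2 \<circ> \<sigma>) c2"
      unfolding op_mul_def by (rule sum_eq_single[OF finite_cfgs c2\<sigma>]) (auto simp: perm_op_def)
    then show ?thesis using True c2\<sigma> by (simp add: perm_op_def)
  qed (simp add: op_mul_def perm_op_def)
qed

lemma unit_op_perm_span:
  assumes \<sigma>: "\<sigma> permutes {..<N}" and "c' \<in> cfgs d N"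
    and "unit_op c (c' \<circ> \<sigma>) \<in> alg_gen d N S"
  shows "perm_span d N S (unit_op c c')"
proof -
  have eq: "c2 \<circ> \<sigma> = c' \<circ> \<sigma> \<longleftrightarrow> c2 = c'" for c2
    using surj_fun_eq[OF permutes_surj[OF \<sigma>]] by (auto simp: fun_eq_iff)
  then have "unit_op c c' = (\<lambda>c1 c2. \<Sum>j::nat<1. 1 * op_mul d N (unit_op c (c' \<circ> \<sigma>)) (perm_op d N \<sigma>) c1 c2)"
    using assms(2) by (intro ext) (auto simp: op_mul_perm_op[OF \<sigma>] unit_op_def eq)
  then show ?thesis
    unfolding perm_span_def using assms
    by (intro exI[of _ 1] exI[of _ "\<lambda>_. 1"] exI[of _ "\<lambda>_. unit_op c (c' \<circ> \<sigma>)"] exI[of _ "\<lambda>_. \<sigma>"]) simp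
qed

lemma op_eq_sum_unit_ops:
  assumes "is_op d N T"
  shows "T = (\<lambda>c1 c2. \<Sum>q\<in>cfgs d N \<times> cfgs d N. T (fst q) (snd q) * unit_op (fst q) (snd q) c1 c2)"
proof (intro ext)
  fix c1 c2 :: cfg
  show "T c1 c2 = (\<Sum>q\<in>cfgs d N \<times> cfgs d N. T (fst q) (snd q) * unit_op (fst q) (snd q) c1 c2)"
  proof (cases "c1 \<in> cfgs d N \<and> c2 \<in> cfgs d N")
    case True
    have "(\<Sum>q\<in>cfgs d N \<times> cfgs d N. T (fst q) (snd q) * unit_op (fst q) (snd q) c1 c2)
        = T c1 c2 * unit_op c1 c2 c1 c2"
      by (subst sum_eq_single[of _ "(c1, c2)"]) (use True finite_cfgs in \<open>auto simp: unit_op_def\<close>)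
    then show ?thesis by (simp add: unit_op_def)
  next
    case False
    then show ?thesis using assms unfolding is_op_def by (auto simp: unit_op_def intro!: sum.neutral)
  qed
qed

lemma perm_span_if_unit_ops:
  assumes "is_op d N T"
    and "\<And>c c'. c \<in> cfgs d N \<Longrightarrow> c' \<in> cfgs d N \<Longrightarrow> T c c' \<noteq> 0 \<Longrightarrow>
           \<exists>\<sigma>. \<sigma> permutes {..<N} \<and> unit_op c (c' \<circ> \<sigma>) \<in> alg_gen d N S"
  shows "perm_span d N S T"
proof -
  have "perm_span d N S (\<lambda>c1 c2. T c c' * unit_op c c' c1 c2)"
    if "c \<in> cfgs d N" "c' \<in> cfgs d N" for c c'
  proof (cases "T c c' = 0")
    case False
    then show ?thesis
      using assms(2)[OF that False] unit_op_perm_span[OF _ that(2)] perm_span_smult by blast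
  qed (simp add: perm_span_zero)
  then have "perm_span d N S (\<lambda>c1 c2. \<Sum>q\<in>cfgs d N \<times> cfgs d N. T (fst q) (snd q) * unit_op (fst q) (snd q) c1 c2)"
    by (intro perm_span_sum) (auto simp: finite_cfgs)
  then show ?thesis using op_eq_sum_unit_ops[OF assms(1)] by simp
qed

subsection \<open>The unital algebra generated by one-site operators\<close>

lemma alg_gen_lincomb:
  assumes "finite I" "\<And>i. i \<in> I \<Longrightarrow> A i \<in> alg_gen d N S"
  shows "(\<lambda>c c'. \<Sum>i\<in>I. f i * A i c c') \<in> alg_gen d N S"
  using assms
proof (induction I rule: finite_induct)
  case empty
  then show ?case using alg_gen.smult[OF alg_gen.unit, of 0] by simp
next
  case (insert x I)
  then show ?case
    using alg_gen.add[OF alg_gen.smult[of "A x" d N S "f x"], of "\<lambda>c c'. \<Sum>i\<in>I. f i * A i c c'"] by simp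
qed

lemma site_op_cong:
  assumes "x < N" "\<And>a b. a < d \<Longrightarrow> b < d \<Longrightarrow> M a b = M' a b"
  shows "site_op d N x M = site_op d N x M'"
  using assms by (auto simp: site_op_def cfgs_def fun_eq_iff)

lemma eq_iff_site_eq:
  assumes "\<forall>y. y \<noteq> x \<longrightarrow> c y = c' y"
  shows "c = c' \<longleftrightarrow> c x = c' x"
  using assms by (metis ext)

lemma site_op_affine:
  "site_op d N x (\<lambda>a b. \<alpha> * (if a = b then 1 else 0) + (\<Sum>i\<in>I. f i * M i a b)) =
   (\<lambda>c c'. \<alpha> * op_id d N c c' + (\<Sum>i\<in>I. f i * site_op d N x (M i) c c'))"
proof (intro ext)
  fix c c' :: cfg
  show "site_op d N x (\<lambda>a b. \<alpha> * (if a = b then 1 else 0) + (\<Sum>i\<in>I. f i * M i a b)) c c' =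
        \<alpha> * op_id d N c c' + (\<Sum>i\<in>I. f i * site_op d N x (M i) c c')"
  proof (cases "c \<in> cfgs d N \<and> c' \<in> cfgs d N \<and> (\<forall>y. y \<noteq> x \<longrightarrow> c y = c' y)")
    case True
    then have "c = c' \<longleftrightarrow> c x = c' x" by (intro eq_iff_site_eq) blast
    with True show ?thesis by (simp add: site_op_def op_id_def)
  next
    case False
    then have "site_op d N x M c c' = 0" for M unfolding site_op_def by auto
    moreover have "op_id d N c c' = 0" using False by (auto simp: op_id_def)
    ultimately show ?thesis by simp
  qed
qed

lemma site_op_affine_in_alg_gen:
  assumes "finite I" "\<And>i. i \<in> I \<Longrightarrow> site_op d N x (M i) \<in> alg_gen d N S"
  shows "site_op d N x (\<lambda>a b. \<alpha> * (if a = b then 1 else 0) + (\<Sum>i\<in>I. f i * M i a b)) \<in> alg_gen d N S"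
  unfolding site_op_affine using assms
  by (intro alg_gen.add alg_gen.smult alg_gen.unit alg_gen_lincomb)

definition partial_unit :: "nat \<Rightarrow> nat \<Rightarrow> cfg \<Rightarrow> cfg \<Rightarrow> nat \<Rightarrow> op" where
  "partial_unit d N c e n = (\<lambda>c1 c2.
     if c1 \<in> cfgs d N \<and> c2 \<in> cfgs d N \<and> (\<forall>x<n. c1 x = c x \<and> c2 x = e x) \<and> (\<forall>x\<ge>n. c1 x = c2 x)
     then 1 else 0)"

lemma partial_unit_0: "partial_unit d N c e 0 = op_id d N"
  by (intro ext) (auto simp: partial_unit_def op_id_def fun_eq_iff[symmetric])

lemma partial_unit_Suc:
  assumes "n < N"
  shows "partial_unit d N c e (Suc n) = op_mul d N (partial_unit d N c e n) (site_op d N n (unit_mat (c n) (e n)))"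
proof (intro ext)
  fix c1 c2 :: cfg
  show "partial_unit d N c e (Suc n) c1 c2 =
        op_mul d N (partial_unit d N c e n) (site_op d N n (unit_mat (c n) (e n))) c1 c2"
  proof (cases "c1 \<in> cfgs d N \<and> c2 \<in> cfgs d N")
    case True
    define c3 where "c3 = c2(n := c1 n)"
    have c3: "c3 \<in> cfgs d N" using True assms unfolding c3_def cfgs_def by auto
    have "op_mul d N (partial_unit d N c e n) (site_op d N n (unit_mat (c n) (e n))) c1 c2
        = partial_unit d N c e n c1 c3 * site_op d N n (unit_mat (c n) (e n)) c3 c2"
      unfolding op_mul_def
    proof (rule sum_eq_single[OF finite_cfgs c3])
      fix c'' assume "c'' \<noteq> c3"
      then have "\<not> ((\<forall>x\<ge>n. c1 x = c'' x) \<and> (\<forall>y. y \<noteq> n \<longrightarrow> c'' y = c2 y))"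
        unfolding c3_def by (auto simp: fun_eq_iff) (metis order_refl)
      then show "partial_unit d N c e n c1 c'' * site_op d N n (unit_mat (c n) (e n)) c'' c2 = 0"
        unfolding partial_unit_def site_op_def by auto
    qed
    also have "\<dots> = partial_unit d N c e (Suc n) c1 c2"
      using True c3 unfolding partial_unit_def site_op_def unit_mat_def c3_def
      by (auto simp: less_Suc_eq le_eq_less_or_eq Suc_le_eq) (metis Suc_lessI)
    finally show ?thesis by simp
  qed (auto simp: partial_unit_def op_mul_def site_op_def)
qed

lemma partial_unit_N:
  assumes "c \<in> cfgs d N" "e \<in> cfgs d N"
  shows "partial_unit d N c e N = unit_op c e"
proof -
  have "c1 = c" if "c1 \<in> cfgs d N" "c \<in> cfgs d N" "\<forall>x<N. c1 x = c x" for c1 c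
    using that by (auto simp: cfgs_def fun_eq_iff) (metis not_le)
  then show ?thesis
    using assms by (intro ext) (auto simp: partial_unit_def unit_op_def cfgs_def)
qed

lemma unit_op_in_alg_gen:
  assumes "c \<in> cfgs d N" "e \<in> cfgs d N"
    and "\<And>x. x < N \<Longrightarrow> site_op d N x (unit_mat (c x) (e x)) \<in> alg_gen d N S"
  shows "unit_op c e \<in> alg_gen d N S"
proof -
  have "n \<le> N \<Longrightarrow> partial_unit d N c e n \<in> alg_gen d N S" for n
    by (induction n) (simp_all add: partial_unit_0 partial_unit_Suc alg_gen.unit alg_gen.mul assms(3))
  then show ?thesis using partial_unit_N[OF assms(1,2)] by force
qed

lemma sum_sites_eq_occupation_sum:
  fixes f :: "nat \<Rightarrow> complex"
  assumes "c \<in> cfgs d N"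
  shows "(\<Sum>x<N. f (c x)) = (\<Sum>a<d. of_nat (occupation N c a) * f a)"
proof -
  have "c ` {..<N} \<subseteq> {..<d}" using assms by (auto simp: cfgs_def)
  from sum.group[OF finite_lessThan finite_lessThan this, of "\<lambda>x. f (c x)"]
  have "(\<Sum>x<N. f (c x)) = (\<Sum>a<d. \<Sum>x\<in>{x. x \<in> {..<N} \<and> c x = a}. f (c x))"
    by simp
  also have "\<dots> = (\<Sum>a<d. \<Sum>x\<in>{x. x < N \<and> c x = a}. f a)"
    by (intro sum.cong) auto
  finally show ?thesis by (simp add: occupation_def)
qed

lemma count_mset_map_upt: "count (mset (map c [0..<N])) a = occupation N c a"
proof -
  have "count (mset (map c [0..<N])) a = length (filter ((=) a) (map c [0..<N]))"
    by (metis length_replicate replicate_count_mset_eq_filter_eq)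
  also have "\<dots> = occupation N c a"
    unfolding length_filter_conv_card occupation_def by (intro arg_cong[where f = card]) auto
  finally show ?thesis .
qed

lemma occupation_eq_permutation:
  assumes c: "c \<in> cfgs d N" and c': "c' \<in> cfgs d N"
    and occ: "\<And>a. a < d \<Longrightarrow> occupation N c a = occupation N c' a"
  obtains \<sigma> where "\<sigma> permutes {..<N}" "c = c' \<circ> \<sigma>"
proof -
  have "occupation N c a = occupation N c' a" for a
  proof (cases "a < d")
    case False
    then have "{x. x < N \<and> c x = a} = {}" "{x. x < N \<and> c' x = a} = {}"
      using c c' by (auto simp: cfgs_def)
    then show ?thesis by (simp only: occupation_def)
  qed (rule occ)
  then have "mset (map c [0..<N]) = mset (map c' [0..<N])"
    by (intro multiset_eqI) (simp only: count_mset_map_upt)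
  then obtain p where p: "p permutes {..<length (map c' [0..<N])}"
    "permute_list p (map c' [0..<N]) = map c [0..<N]"
    by (rule mset_eq_permutation)
  then have pN: "p permutes {..<N}" by simp
  have "c x = c' (p x)" for x
  proof (cases "x < N")
    case True
    then have "p x < N" using permutes_in_image[OF pN] by simp
    then show ?thesis
      using True arg_cong[OF p(2), of "\<lambda>xs. xs ! x"] by (simp add: permute_list_nth[OF p(1)])
  next
    case False
    then show ?thesis using permutes_not_in[OF pN] c c' by (simp add: cfgs_def)
  qed
  then show ?thesis using that[OF pN] by (simp add: fun_eq_iff)
qed

subsection \<open>Operators commuting with the Cartan generators\<close>

definition weight :: "nat \<Rightarrow> (nat \<Rightarrow> complex) \<Rightarrow> cfg \<Rightarrow> complex" where
  "weight N h c = (\<Sum>x<N. h (c x))"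

lemma site_op_diag_mat:
  "site_op d N x (diag_mat h) c c' = (if c = c' \<and> c \<in> cfgs d N then h (c x) else 0)"
proof (cases "c = c'")
  case False
  then have "\<not> ((\<forall>y. y \<noteq> x \<longrightarrow> c y = c' y) \<and> c x = c' x)"
    using eq_iff_site_eq[of x c c'] by blast
  then show ?thesis unfolding site_op_def diag_mat_def by auto
qed (simp add: site_op_def diag_mat_def)

lemma H_tot_diagonal: "H_tot d N H i c c' = (if c = c' \<and> c \<in> cfgs d N then weight N (H i) c else 0)"
proof (cases "c = c' \<and> c \<in> cfgs d N")
  case False
  then show ?thesis unfolding H_tot_def H_site_def site_op_diag_mat if_not_P[OF False] by simp
qed (simp add: H_tot_def H_site_def site_op_diag_mat weight_def)

lemma commute_H_tot_imp_weight_eq: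
  assumes comm: "op_mul d N T (H_tot d N H i) = op_mul d N (H_tot d N H i) T"
    and c: "c \<in> cfgs d N" and c': "c' \<in> cfgs d N" and "T c c' \<noteq> 0"
  shows "weight N (H i) c = weight N (H i) c'"
proof -
  have "op_mul d N T (H_tot d N H i) c c' = T c c' * H_tot d N H i c' c'"
    unfolding op_mul_def by (rule sum_eq_single[OF finite_cfgs c']) (auto simp: H_tot_diagonal)
  also have "\<dots> = T c c' * weight N (H i) c'"
    using c' by (simp only: H_tot_diagonal simp_thms if_True)
  finally have left: "op_mul d N T (H_tot d N H i) c c' = T c c' * weight N (H i) c'" .
  have "op_mul d N (H_tot d N H i) T c c' = H_tot d N H i c c * T c c'"
    unfolding op_mul_def by (rule sum_eq_single[OF finite_cfgs c]) (auto simp: H_tot_diagonal)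
  also have "\<dots> = T c c' * weight N (H i) c"
    using c by (simp only: H_tot_diagonal simp_thms if_True mult.commute)
  finally have right: "op_mul d N (H_tot d N H i) T c c' = T c c' * weight N (H i) c" .
  have "T c c' * weight N (H i) c' = T c c' * weight N (H i) c"
    by (simp only: left[symmetric] right[symmetric] comm)
  then show ?thesis using assms(4) by simp
qed

text \<open>The occupation difference \<open>w\<close> of two configurations with equal weights is traceless
  and orthogonal to every \<open>H\<^sup>i\<close>; being a combination of the \<open>H\<^sup>i\<close>, it is orthogonal to
  itself, and since it is real it vanishes.\<close>

lemma weight_eq_imp_occupation_eq:
  assumes H: "cartan_basis d H" and c: "c \<in> cfgs d N" and c': "c' \<in> cfgs d N"
    and weq: "\<forall>i<d-1. weight N (H i) c = weight N (H i) c'"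
    and "a < d"
  shows "occupation N c a = occupation N c' a"
proof -
  define r where "r b = real (occupation N c b) - real (occupation N c' b)" for b
  define w where "w b = complex_of_real (r b)" for b
  have w_diff: "w b = of_nat (occupation N c b) - of_nat (occupation N c' b)" for b
    by (simp add: w_def r_def)
  have w_sum: "(\<Sum>b<d. w b * h b) = weight N h c - weight N h c'" for h
    unfolding w_diff weight_def sum_sites_eq_occupation_sum[OF c] sum_sites_eq_occupation_sum[OF c']
    by (simp add: left_diff_distrib sum_subtractf)
  have "(\<Sum>b<d. w b) = 0"
    using w_sum[of "\<lambda>_. 1"] by (simp add: weight_def)
  then obtain u where u: "\<forall>b<d. w b = (\<Sum>i<d-1. u i * H i b)"
    using H unfolding cartan_basis_def by blast
  have "(\<Sum>b<d. w b * w b) = (\<Sum>b<d. w b * (\<Sum>i<d-1. u i * H i b))"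
    using u by (intro sum.cong) auto
  also have "\<dots> = (\<Sum>i<d-1. u i * (\<Sum>b<d. w b * H i b))"
    by (simp add: sum_distrib_left sum.swap[of _ "{..<d}"] mult_ac)
  also have "\<dots> = 0"
  proof -
    have "(\<Sum>b<d. w b * H i b) = 0" if "i < d-1" for i
      unfolding w_sum using weq that by simp
    then show ?thesis by simp
  qed
  finally have "complex_of_real (\<Sum>b<d. r b * r b) = 0"
    by (simp only: w_def of_real_sum of_real_mult)
  then have "(\<Sum>b<d. r b * r b) = 0"
    by (simp only: of_real_eq_0_iff)
  then have "\<forall>b\<in>{..<d}. r b * r b = 0"
    by (subst sum_nonneg_eq_0_iff[symmetric]) auto
  then show ?thesis using \<open>a < d\<close> by (simp add: r_def)
qed

text \<open>The projector onto \<open>|a\<rangle>\<close> is \<open>1/d\<close> plus a traceless diagonal matrix.\<close>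

lemma site_projector_in_alg_gen:
  assumes H: "cartan_basis d H" and "x < N" "a < d"
  shows "site_op d N x (unit_mat a a) \<in> alg_gen d N {H_site d N H i x | i x. i < d-1 \<and> x < N}"
proof -
  define v where "v b = (if b = a then 1 else 0) - 1 / (of_nat d :: complex)" for b
  have d: "(of_nat d :: complex) \<noteq> 0" using \<open>a < d\<close> by simp
  have "(\<Sum>b<d. v b) = 1 - of_nat d * (1 / of_nat d)"
    unfolding v_def using \<open>a < d\<close> by (simp add: sum_subtractf)
  also have "\<dots> = 0" using d by simp
  finally have "(\<Sum>b<d. v b) = 0" .
  then obtain u where u: "\<forall>b<d. v b = (\<Sum>i<d-1. u i * H i b)"
    using H unfolding cartan_basis_def by blast
  have "site_op d N x (unit_mat a a) =
        site_op d N x (\<lambda>b b'. 1 / of_nat d * (if b = b' then 1 else 0) + (\<Sum>i<d-1. u i * diag_mat (H i) b b'))"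
  proof (rule site_op_cong[OF \<open>x < N\<close>])
    fix b b' assume "b < d" "b' < d"
    then have "(\<Sum>i<d-1. u i * diag_mat (H i) b b') = (if b = b' then v b else 0)"
      using u by (simp add: diag_mat_def)
    then show "unit_mat a a b b' = 1 / of_nat d * (if b = b' then 1 else 0) + (\<Sum>i<d-1. u i * diag_mat (H i) b b')"
      by (simp add: unit_mat_def v_def)
  qed
  also have "\<dots> \<in> alg_gen d N {H_site d N H i x | i x. i < d-1 \<and> x < N}"
    using \<open>x < N\<close> by (intro site_op_affine_in_alg_gen alg_gen.gen) (auto simp: H_site_def)
  finally show ?thesis .
qed

lemma commuting_op_perm_span:
  assumes H: "cartan_basis d H" and T: "is_op d N T"
    and comm: "\<forall>i<d-1. op_mul d N T (H_tot d N H i) = op_mul d N (H_tot d N H i) T"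
  shows "perm_span d N {H_site d N H i x | i x. i < d-1 \<and> x < N} T"
proof (rule perm_span_if_unit_ops[OF T])
  let ?S = "{H_site d N H i x | i x. i < d-1 \<and> x < N}"
  fix c c' assume c: "c \<in> cfgs d N" and c': "c' \<in> cfgs d N" and "T c c' \<noteq> 0"
  then have "\<forall>i<d-1. weight N (H i) c = weight N (H i) c'"
    using comm commute_H_tot_imp_weight_eq by blast
  then have "\<And>a. a < d \<Longrightarrow> occupation N c a = occupation N c' a"
    by (rule weight_eq_imp_occupation_eq[OF H c c'])
  then obtain \<sigma> where \<sigma>: "\<sigma> permutes {..<N}" "c = c' \<circ> \<sigma>"
    by (rule occupation_eq_permutation[OF c c'])
  have "unit_op c c \<in> alg_gen d N ?S"
    using c by (intro unit_op_in_alg_gen site_projector_in_alg_gen[OF H]) (auto simp: cfgs_def)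
  with \<sigma> show "\<exists>\<sigma>. \<sigma> permutes {..<N} \<and> unit_op c (c' \<circ> \<sigma>) \<in> alg_gen d N ?S"
    by auto
qed

subsection \<open>Spin 1/2\<close>

lemma sigma_plus_eq: "sigma_plus = unit_mat 0 1"
  by (simp add: sigma_plus_def unit_mat_def)

lemma sigma_minus_eq: "sigma_minus = unit_mat 1 0"
  by (simp add: sigma_minus_def unit_mat_def)

lemma occupation_complement:
  assumes "c \<in> cfgs 2 N" "v < 2"
  shows "occupation N c (1 - v) = N - occupation N c v"
proof -
  have "{x. x < N \<and> c x = 1 - v} = {..<N} - {x. x < N \<and> c x = v}"
    using assms by (auto simp: cfgs_def less_2_cases_iff)
  then show ?thesis
    unfolding occupation_def by (simp add: card_Diff_subset finite_subset[of _ "{..<N}"] subset_eq)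
qed

text \<open>The permutation relates \<open>c'\<close> to a configuration \<open>e\<close> with the occupation numbers
  of \<open>c'\<close> that takes the value \<open>v\<close> only on value-\<open>v\<close> sites of \<open>c\<close>.\<close>

lemma occupation_le_permutation:
  assumes c: "c \<in> cfgs 2 N" and c': "c' \<in> cfgs 2 N" and v: "v < 2"
    and le: "occupation N c' v \<le> occupation N c v"
  obtains \<sigma> where "\<sigma> permutes {..<N}" "\<And>x. x < N \<Longrightarrow> c' (\<sigma> x) = v \<Longrightarrow> c x = v"
proof -
  obtain A where A: "A \<subseteq> {x. x < N \<and> c x = v}" "card A = occupation N c' v"
    using obtain_subset_with_card_n[OF le[unfolded occupation_def]] occupation_def by metis
  define e where "e x = (if x < N then (if x \<in> A then v else 1 - v) else 0)" for x
  have e: "e \<in> cfgs 2 N" using v by (auto simp: cfgs_def e_def)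
  have "1 - v \<noteq> v" using v by (auto simp: less_2_cases_iff)
  then have eA: "{x. x < N \<and> e x = v} = A" using A(1) by (auto simp: e_def)
  have "occupation N e a = occupation N c' a" if "a < 2" for a
  proof -
    have "a = v \<or> a = 1 - v" using that v by auto
    then show ?thesis
      using occupation_complement[OF e v] occupation_complement[OF c' v] eA A(2)
      by (auto simp: occupation_def)
  qed
  then obtain \<sigma> where \<sigma>: "\<sigma> permutes {..<N}" "e = c' \<circ> \<sigma>"
    by (rule occupation_eq_permutation[OF e c'])
  show ?thesis
  proof (rule that[OF \<sigma>(1)])
    fix x assume "x < N" "c' (\<sigma> x) = v"
    then have "x \<in> A" using \<sigma>(2) eA by auto
    then show "c x = v" using A(1) by auto
  qed
qed

lemma spin_site_unit_in_alg_gen: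
  assumes x: "x < N" and "a < 2" "b < 2" "v < 2" and "b = v \<Longrightarrow> a = v"
    and S: "{site_op 2 N x pauli_z | x. x < N} \<subseteq> S" "site_op 2 N x (unit_mat v (1 - v)) \<in> S"
  shows "site_op 2 N x (unit_mat a b) \<in> alg_gen 2 N S"
proof (cases "a = b")
  case True
  define s :: complex where "s = (if a = 0 then 1/2 else -1/2)"
  have "site_op 2 N x (unit_mat a b) =
        site_op 2 N x (\<lambda>b b'. 1/2 * (if b = b' then 1 else 0) + (\<Sum>i\<in>{0::nat}. s * pauli_z b b'))"
    using True \<open>a < 2\<close>
    by (intro site_op_cong[OF x]) (auto simp: unit_mat_def pauli_z_def s_def less_2_cases_iff)
  also have "\<dots> \<in> alg_gen 2 N S"
    using x S(1) by (intro site_op_affine_in_alg_gen alg_gen.gen) auto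
  finally show ?thesis .
next
  case False
  moreover have "b \<noteq> v" using False assms(5) by auto
  ultimately have "a = v" "b = 1 - v" using assms(2-4) by (auto simp: less_2_cases_iff)
  then show ?thesis using S(2) by (simp add: alg_gen.gen)
qed

lemma spin_unit_op_in_alg_gen:
  assumes c: "c \<in> cfgs 2 N" and c': "c' \<in> cfgs 2 N" and v: "v < 2"
    and le: "occupation N c' v \<le> occupation N c v"
    and S: "{site_op 2 N x pauli_z | x. x < N} \<subseteq> S" "\<And>x. x < N \<Longrightarrow> site_op 2 N x (unit_mat v (1 - v)) \<in> S"
  shows "\<exists>\<sigma>. \<sigma> permutes {..<N} \<and> unit_op c (c' \<circ> \<sigma>) \<in> alg_gen 2 N S"
proof -
  obtain \<sigma> where \<sigma>: "\<sigma> permutes {..<N}" "\<And>x. x < N \<Longrightarrow> c' (\<sigma> x) = v \<Longrightarrow> c x = v"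
    using occupation_le_permutation[OF c c' v le] by blast
  have c'\<sigma>: "c' \<circ> \<sigma> \<in> cfgs 2 N" by (rule comp_permutes_in_cfgs[OF \<sigma>(1) c'])
  have "unit_op c (c' \<circ> \<sigma>) \<in> alg_gen 2 N S"
  proof (rule unit_op_in_alg_gen[OF c c'\<sigma>])
    fix x assume x: "x < N"
    show "site_op 2 N x (unit_mat (c x) ((c' \<circ> \<sigma>) x)) \<in> alg_gen 2 N S"
      by (rule spin_site_unit_in_alg_gen[OF x _ _ v _ S(1) S(2)[OF x]])
         (use x c c'\<sigma> \<sigma>(2) in \<open>auto simp: cfgs_def\<close>)
  qed
  with \<sigma>(1) show ?thesis by blast
qed

lemma spin_op_decomposition:
  assumes T: "is_op 2 N T"
  shows "\<exists>Tp Tm. T = (\<lambda>c c'. Tp c c' + Tm c c') \<and>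
           perm_span 2 N ({site_op 2 N x pauli_z | x. x < N} \<union> {site_op 2 N x sigma_plus | x. x < N}) Tp \<and>
           perm_span 2 N ({site_op 2 N x pauli_z | x. x < N} \<union> {site_op 2 N x sigma_minus | x. x < N}) Tm"
proof -
  define raising where "raising c c' \<longleftrightarrow> occupation N c' 0 \<le> occupation N c 0" for c c'
  define Tp where "Tp c c' = (if raising c c' then T c c' else 0)" for c c'
  define Tm where "Tm c c' = (if raising c c' then 0 else T c c')" for c c'
  have "perm_span 2 N ({site_op 2 N x pauli_z | x. x < N} \<union> {site_op 2 N x sigma_plus | x. x < N}) Tp"
  proof (rule perm_span_if_unit_ops)
    show "is_op 2 N Tp" using T by (simp add: is_op_def Tp_def)
    fix c c' assume c: "c \<in> cfgs 2 N" and c': "c' \<in> cfgs 2 N" and "Tp c c' \<noteq> 0"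
    then have le: "occupation N c' 0 \<le> occupation N c 0"
      by (simp add: Tp_def raising_def split: if_splits)
    show "\<exists>\<sigma>. \<sigma> permutes {..<N} \<and> unit_op c (c' \<circ> \<sigma>) \<in>
        alg_gen 2 N ({site_op 2 N x pauli_z | x. x < N} \<union> {site_op 2 N x sigma_plus | x. x < N})"
      by (rule spin_unit_op_in_alg_gen[OF c c' _ le]) (auto simp: sigma_plus_eq)
  qed
  moreover have "perm_span 2 N ({site_op 2 N x pauli_z | x. x < N} \<union> {site_op 2 N x sigma_minus | x. x < N}) Tm"
  proof (rule perm_span_if_unit_ops)
    show "is_op 2 N Tm" using T by (simp add: is_op_def Tm_def)
    fix c c' assume c: "c \<in> cfgs 2 N" and c': "c' \<in> cfgs 2 N" and "Tm c c' \<noteq> 0"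
    then have "occupation N c 0 < occupation N c' 0" by (simp add: Tm_def raising_def split: if_splits)
    then have le: "occupation N c' 1 \<le> occupation N c 1"
      using occupation_complement[OF c, of 0] occupation_complement[OF c', of 0] by simp
    show "\<exists>\<sigma>. \<sigma> permutes {..<N} \<and> unit_op c (c' \<circ> \<sigma>) \<in>
        alg_gen 2 N ({site_op 2 N x pauli_z | x. x < N} \<union> {site_op 2 N x sigma_minus | x. x < N})"
      by (rule spin_unit_op_in_alg_gen[OF c c' _ le]) (auto simp: sigma_minus_eq)
  qed
  moreover have "T = (\<lambda>c c'. Tp c c' + Tm c c')"
    by (intro ext) (simp add: Tp_def Tm_def)
  ultimately show ?thesis by blast
qed

theorem lemma6p1:
  shows "(\<forall>(d::nat) (N::nat) H T.
            cartan_basis d H \<and> is_op d N T \<and>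
            (\<forall>i<d-1. op_mul d N T (H_tot d N H i) = op_mul d N (H_tot d N H i) T)
            \<longrightarrow> perm_span d N {H_site d N H i x | i x. i < d-1 \<and> x < N} T)
       \<and> (\<forall>(N::nat) T. is_op 2 N T \<longrightarrow>
            (\<exists>Tp Tm. T = (\<lambda>c c'. Tp c c' + Tm c c') \<and>
               perm_span 2 N ({site_op 2 N x pauli_z | x. x < N} \<union> {site_op 2 N x sigma_plus | x. x < N}) Tp \<and>
               perm_span 2 N ({site_op 2 N x pauli_z | x. x < N} \<union> {site_op 2 N x sigma_minus | x. x < N}) Tm))"
  using commuting_op_perm_span spin_op_decomposition by blast

end
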